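(* Let $M^*\in[0,1]^{n_1\times n_2}$. For any fixed matrix $A\in\mathbb R^{n_1\times n_2}$ and scalar $u\ge0$, \[ |\langle Y-M^*,A\rangle|\le2(\zeta+1)\Big(\sqrt{e-1}\,\|A\|_F\sqrt{\frac{n_1n_2}{N}u}+\|A\|_\infty\frac{n_1n_2}{N}u\Big) \] with probability at least $1-4e^{-u}$. Consequently, for any nonempty subset $\mathcal S\subset[n_1]\times[n_2]$, \[ \Big|\sum_{(i,j)\in\mathcal S}(Y_{i,j}-M^*_{i,j})\Big|\le8(\zeta+1)\Big(\sqrt{\frac{|\mathcal S|n_1n_2}{N}\log(n_1n_2)}+\frac{n_1n_2}{N}\log(n_1n_2)\Big) \] with probability at least $1-4(n_1n_2)^{-4}$.
   Context: Observation model: fix $N>0$. Draw $N'\sim\mathrm{Poi}(N)$ independently of everything else, then $N'$ independent pairs $(X_\ell,y_\ell)$ with $X_\ell$ uniform on $\{E^{(i,j)}:i\in[n_1],j\in[n_2]\}$ ($E^{(i,j)}$ has $1$ in entry $(i,j)$ and $0$ elsewhere) and $y_\ell=\mathrm{trace}(X_\ell^\top M^* )+z_\ell$, where $z_\ell$ are independent, zero-mean, with $\mathbb{E}\exp(sz_\ell)\le\exp(\zeta^2s^2)$ for all $|s|\le1/\zeta$ ($\zeta>0$). $Y_{i,j}=\frac{n_1n_2}{N}\sum_{\ell=1}^{N'}y_\ell\mathbf 1\{X_\ell=E^{(i,j)}\}$. $\langle A,B\rangle=\mathrm{trace}(A^\top B)$; $\|A\|_\infty=\max_{i,j}|A_{i,j}|$;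 logarithms natural. *)

theory Defs
  imports "HOL-Probability.Probability"
begin

text \<open>Index set [n1] x [n2], 0-based: entry (i,j) with i < n1, j < n2.
  Matrices in R^{n1 x n2} are functions nat => nat => real, only entries on the grid matter.\<close>
definition grid :: "nat \<Rightarrow> nat \<Rightarrow> (nat \<times> nat) set" where
  "grid n1 n2 = {0..<n1} \<times> {0..<n2}"

text \<open>An outcome is (N', w) where N' is the
  Poisson(N) count and w l = (X_l, z_l) gives the sampled location X_l (uniform on the grid,
  encoding E^{(i,j)} by (i,j)) and the noise z_l (law D l).\<close>
definition obs_space :: "real \<Rightarrow> nat \<Rightarrow> nat \<Rightarrow> (nat \<Rightarrow> real measure)
    \<Rightarrow> (nat \<times> (nat \<Rightarrow> (nat \<times> nat) \<times> real)) measure" where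
  "obs_space N n1 n2 D =
     measure_pmf (poisson_pmf N) \<Otimes>\<^sub>M
     (\<Pi>\<^sub>M l\<in>UNIV. measure_pmf (pmf_of_set (grid n1 n2)) \<Otimes>\<^sub>M D l)"

text \<open>y_l = trace(X_l^T M*) + z_l = M*_{X_l} + z_l, and
  Y_{i,j} = (n1 n2 / N) * sum_{l < N'} y_l 1{X_l = E^{(i,j)}}.\<close>
definition Yobs :: "real \<Rightarrow> nat \<Rightarrow> nat \<Rightarrow> (nat \<Rightarrow> nat \<Rightarrow> real)
    \<Rightarrow> nat \<times> (nat \<Rightarrow> (nat \<times> nat) \<times> real) \<Rightarrow> nat \<Rightarrow> nat \<Rightarrow> real" where
  "Yobs N n1 n2 Mstar \<omega> i j =
     (real n1 * real n2 / N) *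
     (\<Sum>l<fst \<omega>. (if fst (snd \<omega> l) = (i, j)
                    then Mstar (fst (fst (snd \<omega> l))) (snd (fst (snd \<omega> l))) + snd (snd \<omega> l)
                    else 0))"

definition frob_norm :: "nat \<Rightarrow> nat \<Rightarrow> (nat \<Rightarrow> nat \<Rightarrow> real) \<Rightarrow> real" where
  "frob_norm n1 n2 A = sqrt (\<Sum>(i,j)\<in>grid n1 n2. (A i j)\<^sup>2)"

definition max_norm :: "nat \<Rightarrow> nat \<Rightarrow> (nat \<Rightarrow> nat \<Rightarrow> real) \<Rightarrow> real" where
  "max_norm n1 n2 A = Max ((\<lambda>(i,j). \<bar>A i j\<bar>) ` grid n1 n2)"

definition mat_inner :: "nat \<Rightarrow> nat \<Rightarrow> (nat \<Rightarrow> nat \<Rightarrow> real) \<Rightarrow> (nat \<Rightarrow> nat \<Rightarrow> real) \<Rightarrow> real" where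
  "mat_inner n1 n2 B A = (\<Sum>(i,j)\<in>grid n1 n2. B i j * A i j)"

definition noise_ok :: "real \<Rightarrow> real measure \<Rightarrow> bool" where
  "noise_ok \<zeta> D \<longleftrightarrow> prob_space D \<and> sets D = sets borel \<and>
     integrable D (\<lambda>z. z) \<and> (\<integral>z. z \<partial>D) = 0 \<and>
     (\<forall>s. \<bar>s\<bar> \<le> 1 / \<zeta> \<longrightarrow>
        integrable D (\<lambda>z. exp (s * z)) \<and> (\<integral>z. exp (s * z) \<partial>D) \<le> exp (\<zeta>\<^sup>2 * s\<^sup>2))"

end

theory Submission
  imports Defs
begin

(* <Y - M*, A> + <M*, A> is a compound Poisson sum: N' ~ Poi(N) independent copies of
   c A(X) (M*(X) + z), c = n1 n2 / N.  Its moment generating function is therefore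
   exp (N (phi s - 1)), phi being that of one summand.  The noise condition and
   exp w <= 1 + w + 2/3 w^2 for |w| <= 1/2 give N (phi s - 1) - s <M*, A> <= s^2 V with
   V = (e - 1) (1 + zeta)^2 c |A|_F^2 whenever 0 < s <= 1/b, b = 2 (1 + zeta) c |A|_max.
   Chernoff's method turns this sub-gamma bound into the tail bound 2 sqrt (V u) + b u,
   for A and for -A.  The bound for sums over S is the case A = 1_S, u = 4 log (n1 n2). *)

lemma exp_le_quadratic_Taylor:
  fixes w :: real
  assumes w: "\<bar>w\<bar> \<le> 1/2"
  shows "exp w \<le> 1 + w + 2/3 * w\<^sup>2"
proof -
  obtain t where t: "\<bar>t\<bar> \<le> \<bar>w\<bar>"
    and Taylor: "exp w = (\<Sum>m<3. w ^ m / fact m) + exp t / fact 3 * w ^ 3"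
    using Maclaurin_exp_le[of w 3] by blast
  have "exp t \<le> 2"
    using exp_half_le2 t w by (meson abs_le_D1 exp_le_cancel_iff order_trans)
  have "exp t / fact 3 * w ^ 3 \<le> exp t / 6 * (\<bar>w\<bar> * w\<^sup>2)"
    using abs_ge_self[of "exp t / fact 3 * w ^ 3"]
    by (simp add: fact_numeral abs_mult power_abs eval_nat_numeral)
  also have "\<dots> \<le> 2 / 6 * (\<bar>w\<bar> * w\<^sup>2)"
    using \<open>exp t \<le> 2\<close> by (intro mult_right_mono) auto
  also have "\<dots> \<le> 2 / 6 * (1/2 * w\<^sup>2)"
    using w by (intro mult_left_mono mult_right_mono) auto
  finally have "exp t / fact 3 * w ^ 3 \<le> w\<^sup>2 / 6"
    by simp
  moreover have "(\<Sum>m<3. w ^ m / fact m) = 1 + w + w\<^sup>2 / 2"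
    by (simp add: eval_nat_numeral fact_numeral)
  ultimately show ?thesis
    using Taylor by simp
qed

lemma exp_one_ge_8_div_3: "8/3 \<le> exp (1::real)"
proof -
  obtain t where "exp (1::real) = (\<Sum>m<4. 1 ^ m / fact m) + exp t / fact 4 * 1 ^ 4"
    using Maclaurin_exp_le[of 1 4] by blast
  moreover have "(\<Sum>m<4. (1::real) ^ m / fact m) = 8/3"
    by (simp add: eval_nat_numeral fact_numeral)
  moreover have "exp t / fact 4 * 1 ^ 4 \<ge> (0::real)"
    by simp
  ultimately show ?thesis
    by linarith
qed

lemma exp_linear_plus_square_excess_le:
  fixes \<mu> \<beta> \<zeta> :: real
  assumes \<mu>: "\<bar>\<mu>\<bar> \<le> 1" and \<zeta>: "\<zeta> \<ge> 0" and \<beta>: "\<bar>\<beta>\<bar> * (1 + \<zeta>) \<le> 1/2"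
  shows "exp (\<mu> * \<beta> + \<zeta>\<^sup>2 * \<beta>\<^sup>2) - 1 - \<mu> * \<beta> \<le> (exp 1 - 1) * (1 + \<zeta>)\<^sup>2 * \<beta>\<^sup>2"
proof -
  define w where "w = \<mu> * \<beta> + \<zeta>\<^sup>2 * \<beta>\<^sup>2"
  have \<zeta>\<beta>: "\<zeta> * \<bar>\<beta>\<bar> \<le> 1/2"
    using \<beta> \<zeta> by (simp add: algebra_simps)
  have "\<bar>\<mu> * \<beta>\<bar> \<le> \<bar>\<beta>\<bar>"
    using \<mu> by (simp add: abs_mult mult_left_le_one_le)
  moreover have "\<zeta>\<^sup>2 * \<beta>\<^sup>2 \<le> \<zeta> * \<bar>\<beta>\<bar>"
    using \<zeta>\<beta> \<zeta> mult_left_le_one_le[of "\<zeta> * \<bar>\<beta>\<bar>" "\<zeta> * \<bar>\<beta>\<bar>"]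
    by (simp add: power2_eq_square algebra_simps)
  ultimately have w_le: "\<bar>w\<bar> \<le> (1 + \<zeta>) * \<bar>\<beta>\<bar>"
    unfolding w_def using abs_triangle_ineq[of "\<mu> * \<beta>" "\<zeta>\<^sup>2 * \<beta>\<^sup>2"]
    by (simp add: abs_mult algebra_simps)
  then have "\<bar>w\<bar> \<le> 1/2"
    using \<beta> by (simp add: mult.commute)
  then have "exp w - 1 - w \<le> 2/3 * w\<^sup>2"
    using exp_le_quadratic_Taylor by force
  also have "\<dots> \<le> 2/3 * ((1 + \<zeta>)\<^sup>2 * \<beta>\<^sup>2)"
    using w_le power_mono[OF w_le abs_ge_zero, of 2] by (simp add: power_mult_distrib)
  finally have "exp w - 1 - \<mu> * \<beta> \<le> \<zeta>\<^sup>2 * \<beta>\<^sup>2 + 2/3 * ((1 + \<zeta>)\<^sup>2 * \<beta>\<^sup>2)"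
    by (simp add: w_def)
  also have "\<dots> \<le> (1 + 2/3) * ((1 + \<zeta>)\<^sup>2 * \<beta>\<^sup>2)"
    using \<zeta> mult_right_mono[OF power_mono[of \<zeta> "1 + \<zeta>" 2] zero_le_power2[of \<beta>]]
    by (simp add: algebra_simps)
  also have "\<dots> \<le> (exp 1 - 1) * ((1 + \<zeta>)\<^sup>2 * \<beta>\<^sup>2)"
    using exp_one_ge_8_div_3 by (intro mult_right_mono) auto
  finally show ?thesis
    by (simp add: w_def mult.assoc)
qed

lemma sub_gamma_Chernoff_parameter:
  fixes V b u :: real
  assumes V: "V > 0" and b: "b > 0" and u: "u > 0"
  obtains s where "s > 0" "s \<le> 1 / b" "s\<^sup>2 * V - s * (2 * sqrt (V * u) + b * u) \<le> - u"
proof (cases "sqrt (u / V) \<le> 1 / b")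
  case True
  define s where "s = sqrt (u / V)"
  have "s\<^sup>2 * V = u" "s * sqrt (V * u) = u"
    using V u by (simp_all add: s_def real_sqrt_mult[symmetric])
  moreover have "s > 0"
    using V u by (simp add: s_def)
  ultimately show ?thesis
    using True b u by (intro that[of s]) (simp_all add: s_def algebra_simps)
next
  case False
  define s where "s = 1 / b"
  have "sqrt V * s \<le> sqrt u"
    using False V b u by (simp add: s_def real_sqrt_divide field_simps)
  then have "(sqrt V * s) * (sqrt V * s) \<le> sqrt u * (sqrt V * s)"
    using V b by (intro mult_right_mono) (auto simp: s_def)
  then have "s\<^sup>2 * V \<le> s * sqrt (V * u)"
    using V by (simp add: power2_eq_square real_sqrt_mult algebra_simps)
  moreover have "s * (b * u) = u" "s * sqrt (V * u) \<ge> 0"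
    using b V u by (simp_all add: s_def)
  ultimately show ?thesis
    using b by (intro that[of s]) (simp_all add: s_def algebra_simps)
qed

lemma (in prob_space) sub_gamma_upper_tail:
  assumes X[measurable]: "X \<in> borel_measurable M"
    and V: "V > 0" and b: "b > 0" and u: "u > 0"
    and mgf: "\<And>s. 0 < s \<Longrightarrow> s \<le> 1 / b \<Longrightarrow>
      (\<integral>\<^sup>+ x. ennreal (exp (s * X x)) \<partial>M) \<le> ennreal (exp (s\<^sup>2 * V))"
  shows "prob {x \<in> space M. 2 * sqrt (V * u) + b * u \<le> X x} \<le> exp (- u)"
proof -
  define t where "t = 2 * sqrt (V * u) + b * u"
  obtain s where s: "s > 0" "s \<le> 1 / b" and exponent: "s\<^sup>2 * V - s * t \<le> - u"
    using sub_gamma_Chernoff_parameter[OF V b u] unfolding t_def by blast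
  have "emeasure M {x \<in> space M. t \<le> X x}
      \<le> ennreal (exp (- s * t)) * (\<integral>\<^sup>+ x. ennreal (exp (s * X x)) * indicator (space M) x \<partial>M)"
    using s by (intro Chernoff_ineq_nn_integral_ge) auto
  also have "(\<integral>\<^sup>+ x. ennreal (exp (s * X x)) * indicator (space M) x \<partial>M)
      = (\<integral>\<^sup>+ x. ennreal (exp (s * X x)) \<partial>M)"
    by (intro nn_integral_cong) simp
  also have "ennreal (exp (- s * t)) * \<dots> \<le> ennreal (exp (- s * t)) * ennreal (exp (s\<^sup>2 * V))"
    using s by (intro mult_left_mono mgf) auto
  also have "\<dots> = ennreal (exp (s\<^sup>2 * V - s * t))"
    by (simp add: ennreal_mult[symmetric] exp_add[symmetric])
  also have "\<dots> \<le> ennreal (exp (- u))"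
    using exponent by (intro ennreal_leI) simp
  finally show ?thesis
    by (simp add: t_def emeasure_eq_measure)
qed

lemma nn_integral_PiM_exp_partial_sum_le:
  fixes M :: "nat \<Rightarrow> 'a measure" and g :: "'a \<Rightarrow> real"
  assumes M: "\<And>l. prob_space (M l)" and g: "\<And>l. g \<in> borel_measurable (M l)"
    and mgf: "\<And>l. (\<integral>\<^sup>+ p. ennreal (exp (s * g p)) \<partial>M l) \<le> ennreal \<phi>"
  shows "(\<integral>\<^sup>+ w. ennreal (exp (s * (\<Sum>l<n. g (w l)))) \<partial>PiM UNIV M) \<le> ennreal \<phi> ^ n"
proof -
  interpret product_prob_space M UNIV
    by (simp add: product_prob_space_def product_sigma_finite_def product_prob_space_axioms_def
        M prob_space_imp_sigma_finite)
  let ?F = "\<lambda>v. (\<Prod>l<n. ennreal (exp (s * g (v l))))"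
  have exp_g[measurable]: "(\<lambda>p. ennreal (exp (s * g p))) \<in> borel_measurable (M l)" for l
    using g[of l] by measurable
  have F: "?F \<in> borel_measurable (PiM {..<n} M)"
  proof (rule borel_measurable_prod_ennreal)
    fix l assume l: "l \<in> {..<n}"
    show "(\<lambda>v. ennreal (exp (s * g (v l)))) \<in> borel_measurable (PiM {..<n} M)"
      by (rule measurable_compose[OF measurable_component_singleton[OF l] exp_g])
  qed
  have "(\<integral>\<^sup>+ w. ennreal (exp (s * (\<Sum>l<n. g (w l)))) \<partial>PiM UNIV M)
      = (\<integral>\<^sup>+ w. ?F (restrict w {..<n}) \<partial>PiM UNIV M)"
    by (intro nn_integral_cong) (simp add: sum_distrib_left exp_sum prod_ennreal)
  also have "\<dots> = (\<integral>\<^sup>+ v. ?F v \<partial>distr (PiM UNIV M) (PiM {..<n} M) (\<lambda>w. restrict w {..<n}))"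
    using F by (intro nn_integral_distr[symmetric] measurable_restrict_subset) auto
  also have "distr (PiM UNIV M) (PiM {..<n} M) (\<lambda>w. restrict w {..<n}) = PiM {..<n} M"
    by (rule distr_PiM_restrict_finite) auto
  also have "(\<integral>\<^sup>+ v. ?F v \<partial>PiM {..<n} M) = (\<Prod>l<n. \<integral>\<^sup>+ p. ennreal (exp (s * g p)) \<partial>M l)"
    by (rule product_nn_integral_prod) (simp_all add: exp_g)
  also have "\<dots> \<le> (\<Prod>l<n. ennreal \<phi>)"
    by (rule prod_mono_ennreal) (rule mgf)
  finally show ?thesis
    by simp
qed

lemma nn_integral_poisson_power:
  fixes N \<phi> :: real
  assumes N: "N > 0" and \<phi>: "\<phi> \<ge> 0"
  shows "(\<integral>\<^sup>+ n. ennreal \<phi> ^ n \<partial>measure_pmf (poisson_pmf N)) = ennreal (exp (N * (\<phi> - 1)))"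
proof -
  have summand: "ennreal (pmf (poisson_pmf N) n) * ennreal \<phi> ^ n
      = ennreal ((N * \<phi>) ^ n / fact n * exp (- N))" for n
    using N \<phi> by (simp add: ennreal_power ennreal_mult[symmetric] power_mult_distrib)
  have "(\<lambda>n. (N * \<phi>) ^ n / fact n * exp (- N)) sums (exp (N * \<phi>) * exp (- N))"
    using sums_mult2[OF exp_converges[of "N * \<phi>"], of "exp (- N)"]
    by (simp add: divide_inverse mult.commute)
  then have "(\<Sum>n. ennreal ((N * \<phi>) ^ n / fact n * exp (- N))) = ennreal (exp (N * \<phi>) * exp (- N))"
    using N \<phi> by (intro suminf_ennreal_eq) auto
  then show ?thesis
    by (simp add: nn_integral_measure_pmf nn_integral_count_space_nat summand
        right_diff_distrib mult_exp_exp)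
qed

lemma measurable_random_partial_sum:
  fixes p :: "nat pmf" and g :: "'a \<Rightarrow> real"
  assumes g: "\<And>l. g \<in> borel_measurable (M l)"
  shows "(\<lambda>\<omega>. \<Sum>l<fst \<omega>. g (snd \<omega> l)) \<in> borel_measurable (measure_pmf p \<Otimes>\<^sub>M PiM UNIV M)"
proof (rule measurable_compose_countable[where f = "\<lambda>n \<omega>. \<Sum>l<n. g (snd \<omega> l)"])
  have "(\<lambda>\<omega>. snd \<omega> l) \<in> measure_pmf p \<Otimes>\<^sub>M PiM UNIV M \<rightarrow>\<^sub>M M l" for l
    by (rule measurable_compose[OF measurable_snd measurable_component_singleton]) simp
  then show "(\<lambda>\<omega>. \<Sum>l<n. g (snd \<omega> l)) \<in> borel_measurable (measure_pmf p \<Otimes>\<^sub>M PiM UNIV M)" for n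
    using g by (intro borel_measurable_sum) (rule measurable_compose)
qed (rule measurable_compose[OF measurable_fst], simp)

lemma nn_integral_compound_Poisson_exp_le:
  fixes N \<phi> :: real
  assumes N: "N > 0" and \<phi>: "\<phi> \<ge> 0"
    and M: "\<And>l. prob_space (M l)" and g: "\<And>l. g \<in> borel_measurable (M l)"
    and mgf: "\<And>l. (\<integral>\<^sup>+ p. ennreal (exp (s * g p)) \<partial>M l) \<le> ennreal \<phi>"
  shows "(\<integral>\<^sup>+ \<omega>. ennreal (exp (s * (\<Sum>l<fst \<omega>. g (snd \<omega> l))))
           \<partial>(measure_pmf (poisson_pmf N) \<Otimes>\<^sub>M PiM UNIV M))
         \<le> ennreal (exp (N * (\<phi> - 1)))"
proof -
  interpret P: prob_space "PiM UNIV M"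
    using M by (rule prob_space_PiM)
  have "(\<lambda>\<omega>. \<Sum>l<fst \<omega>. g (snd \<omega> l))
      \<in> borel_measurable (measure_pmf (poisson_pmf N) \<Otimes>\<^sub>M PiM UNIV M)"
    using g by (rule measurable_random_partial_sum)
  then have exp_sum: "(\<lambda>\<omega>. ennreal (exp (s * (\<Sum>l<fst \<omega>. g (snd \<omega> l)))))
      \<in> borel_measurable (measure_pmf (poisson_pmf N) \<Otimes>\<^sub>M PiM UNIV M)"
    by measurable
  have "(\<integral>\<^sup>+ \<omega>. ennreal (exp (s * (\<Sum>l<fst \<omega>. g (snd \<omega> l))))
        \<partial>(measure_pmf (poisson_pmf N) \<Otimes>\<^sub>M PiM UNIV M))
      = (\<integral>\<^sup>+ n. (\<integral>\<^sup>+ w. ennreal (exp (s * (\<Sum>l<n. g (w l)))) \<partial>PiM UNIV M)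
        \<partial>measure_pmf (poisson_pmf N))"
    using P.nn_integral_fst[OF exp_sum] by simp
  also have "\<dots> \<le> (\<integral>\<^sup>+ n. ennreal \<phi> ^ n \<partial>measure_pmf (poisson_pmf N))"
    by (intro nn_integral_mono nn_integral_PiM_exp_partial_sum_le M g mgf)
  also have "\<dots> = ennreal (exp (N * (\<phi> - 1)))"
    using N \<phi> by (rule nn_integral_poisson_power)
  finally show ?thesis .
qed

definition weighted_sample ::
    "'a::countable set \<Rightarrow> ('a \<Rightarrow> real) \<Rightarrow> ('a \<Rightarrow> real) \<Rightarrow> 'a \<times> real \<Rightarrow> real" where
  "weighted_sample G h k = (\<lambda>(x, z). if x \<in> G then h x + k x * z else 0)"

lemma weighted_sample_measurable:
  assumes "sets D = sets borel"
  shows "weighted_sample G h k \<in> borel_measurable (measure_pmf p \<Otimes>\<^sub>M D)"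
proof -
  have "sets (measure_pmf p \<Otimes>\<^sub>M D) = sets (count_space UNIV \<Otimes>\<^sub>M borel)"
    using assms by (intro sets_pair_measure_cong) auto
  moreover have "weighted_sample G h k \<in> borel_measurable (count_space UNIV \<Otimes>\<^sub>M borel)"
    unfolding weighted_sample_def by measurable
  ultimately show ?thesis
    using measurable_cong_sets by blast
qed

lemma nn_integral_exp_weighted_sample_le:
  assumes G: "finite G" "G \<noteq> {}" and D: "noise_ok \<zeta> D"
    and sk: "\<And>x. x \<in> G \<Longrightarrow> \<bar>s * k x\<bar> \<le> 1 / \<zeta>"
  shows "(\<integral>\<^sup>+ p. ennreal (exp (s * weighted_sample G h k p)) \<partial>(measure_pmf (pmf_of_set G) \<Otimes>\<^sub>M D))
    \<le> ennreal ((\<Sum>x\<in>G. exp (s * h x + \<zeta>\<^sup>2 * (s * k x)\<^sup>2)) / card G)"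
proof -
  interpret D: prob_space D
    using D by (simp add: noise_ok_def)
  have sets_D: "sets D = sets borel"
    using D by (simp add: noise_ok_def)
  have exp_measurable: "(\<lambda>p. ennreal (exp (s * weighted_sample G h k p)))
      \<in> borel_measurable (measure_pmf (pmf_of_set G) \<Otimes>\<^sub>M D)"
    using weighted_sample_measurable[OF sets_D] by measurable
  have "(\<integral>\<^sup>+ p. ennreal (exp (s * weighted_sample G h k p)) \<partial>(measure_pmf (pmf_of_set G) \<Otimes>\<^sub>M D))
      = (\<integral>\<^sup>+ x. (\<integral>\<^sup>+ z. ennreal (exp (s * weighted_sample G h k (x, z))) \<partial>D) \<partial>pmf_of_set G)"
    using D.nn_integral_fst[OF exp_measurable] by simp
  also have "\<dots> = (\<Sum>x\<in>G. (\<integral>\<^sup>+ z. ennreal (exp (s * weighted_sample G h k (x, z))) \<partial>D)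
      * ennreal (1 / card G))"
    using G by (subst nn_integral_measure_pmf_finite) auto
  also have "\<dots> \<le> (\<Sum>x\<in>G. ennreal (exp (s * h x + \<zeta>\<^sup>2 * (s * k x)\<^sup>2)) * ennreal (1 / card G))"
  proof (intro sum_mono mult_right_mono)
    fix x assume x: "x \<in> G"
    have noise_mgf: "integrable D (\<lambda>z. exp (s * k x * z))"
      "(\<integral>z. exp (s * k x * z) \<partial>D) \<le> exp (\<zeta>\<^sup>2 * (s * k x)\<^sup>2)"
      using D sk[OF x] unfolding noise_ok_def by blast+
    have "(\<integral>\<^sup>+ z. ennreal (exp (s * weighted_sample G h k (x, z))) \<partial>D)
        = (\<integral>\<^sup>+ z. ennreal (exp (s * h x)) * ennreal (exp (s * k x * z)) \<partial>D)"
      using x by (intro nn_integral_cong)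
        (simp add: weighted_sample_def ennreal_mult' distrib_left mult.assoc exp_add)
    also have "\<dots> = ennreal (exp (s * h x)) * ennreal (\<integral>z. exp (s * k x * z) \<partial>D)"
      using noise_mgf by (simp add: nn_integral_cmult nn_integral_eq_integral)
    also have "\<dots> \<le> ennreal (exp (s * h x)) * ennreal (exp (\<zeta>\<^sup>2 * (s * k x)\<^sup>2))"
      using noise_mgf by (intro mult_left_mono ennreal_leI) auto
    finally show "(\<integral>\<^sup>+ z. ennreal (exp (s * weighted_sample G h k (x, z))) \<partial>D)
        \<le> ennreal (exp (s * h x + \<zeta>\<^sup>2 * (s * k x)\<^sup>2))"
      by (simp add: ennreal_mult' exp_add)
  qed auto
  also have "\<dots> = ennreal (\<Sum>x\<in>G. exp (s * h x + \<zeta>\<^sup>2 * (s * k x)\<^sup>2) * (1 / card G))"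
    by (simp add: ennreal_mult''[symmetric] sum_ennreal[symmetric] del: sum_ennreal)
  also have "\<dots> = ennreal ((\<Sum>x\<in>G. exp (s * h x + \<zeta>\<^sup>2 * (s * k x)\<^sup>2)) / card G)"
    by (simp add: sum_divide_distrib)
  finally show ?thesis .
qed

lemma finite_grid: "finite (grid n1 n2)"
  by (simp add: grid_def)

lemma card_grid: "card (grid n1 n2) = n1 * n2"
  by (simp add: grid_def)

lemma grid_nonempty: "n1 > 0 \<Longrightarrow> n2 > 0 \<Longrightarrow> grid n1 n2 \<noteq> {}"
  by (auto simp: grid_def)

lemma abs_le_max_norm: "(i, j) \<in> grid n1 n2 \<Longrightarrow> \<bar>A i j\<bar> \<le> max_norm n1 n2 A"
  unfolding max_norm_def by (rule Max_ge) (auto simp: finite_grid)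

lemma max_norm_nonneg:
  assumes "n1 > 0" "n2 > 0"
  shows "max_norm n1 n2 A \<ge> 0"
proof -
  obtain i j where "(i, j) \<in> grid n1 n2"
    using grid_nonempty[OF assms] by auto
  then show ?thesis
    using abs_le_max_norm abs_ge_zero order_trans by blast
qed

lemma frob_norm_nonneg: "frob_norm n1 n2 A \<ge> 0"
  unfolding frob_norm_def by (intro real_sqrt_ge_zero sum_nonneg) auto

lemma max_norm_le_frob_norm:
  assumes "n1 > 0" "n2 > 0"
  shows "max_norm n1 n2 A \<le> frob_norm n1 n2 A"
proof -
  have "max_norm n1 n2 A \<in> (\<lambda>(i, j). \<bar>A i j\<bar>) ` grid n1 n2"
    unfolding max_norm_def using finite_grid grid_nonempty[OF assms] by (intro Max_in) auto
  then obtain i j where ij: "(i, j) \<in> grid n1 n2" "max_norm n1 n2 A = \<bar>A i j\<bar>"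
    by auto
  have "(A i j)\<^sup>2 \<le> (\<Sum>(i, j)\<in>grid n1 n2. (A i j)\<^sup>2)"
    using member_le_sum[OF ij(1), of "\<lambda>(i, j). (A i j)\<^sup>2"] finite_grid by auto
  then show ?thesis
    unfolding frob_norm_def ij(2) using real_sqrt_le_mono by fastforce
qed

lemma prob_space_obs_space:
  assumes "\<And>l. noise_ok \<zeta> (D l)"
  shows "prob_space (obs_space N n1 n2 D)"
  unfolding obs_space_def using assms
  by (intro prob_space_pair prob_space_PiM) (simp_all add: prob_space_measure_pmf noise_ok_def)

text \<open>Samples outside the grid, a null event, are discarded by \<open>weighted_sample\<close>,
  so the identity holds for every outcome.\<close>
lemma mat_inner_Yobs_centred_eq:
  "mat_inner n1 n2 (\<lambda>i j. Yobs N n1 n2 M \<omega> i j - M i j) A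
   = (\<Sum>l<fst \<omega>. weighted_sample (grid n1 n2)
        (\<lambda>(i, j). real n1 * real n2 / N * M i j * A i j)
        (\<lambda>(i, j). real n1 * real n2 / N * A i j) (snd \<omega> l))
     - mat_inner n1 n2 M A"
proof -
  define c where "c = real n1 * real n2 / N"
  define X where "X l = fst (snd \<omega> l)" for l
  define y where "y l = M (fst (X l)) (snd (X l)) + snd (snd \<omega> l)" for l
  have Y: "Yobs N n1 n2 M \<omega> i j = c * (\<Sum>l<fst \<omega>. if X l = (i, j) then y l else 0)" for i j
    unfolding Yobs_def c_def X_def y_def by simp
  have "(\<Sum>(i, j)\<in>grid n1 n2. Yobs N n1 n2 M \<omega> i j * A i j)
      = (\<Sum>x\<in>grid n1 n2. \<Sum>l<fst \<omega>. if X l = x then c * y l * A (fst (X l)) (snd (X l)) else 0)"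
    unfolding Y by (intro sum.cong refl)
      (auto simp: sum_distrib_left sum_distrib_right if_distrib if_distribR cong: if_cong)
  also have "\<dots> = (\<Sum>l<fst \<omega>. \<Sum>x\<in>grid n1 n2.
      if X l = x then c * y l * A (fst (X l)) (snd (X l)) else 0)"
    by (rule sum.swap)
  also have "\<dots> = (\<Sum>l<fst \<omega>. weighted_sample (grid n1 n2)
        (\<lambda>(i, j). c * M i j * A i j) (\<lambda>(i, j). c * A i j) (snd \<omega> l))"
    by (intro sum.cong refl)
      (auto simp: finite_grid weighted_sample_def X_def y_def case_prod_unfold algebra_simps)
  finally show ?thesis
    by (simp add: mat_inner_def c_def left_diff_distrib sum_subtractf case_prod_unfold)
qed

lemma measurable_obs_sum:
  assumes "\<And>l. noise_ok \<zeta> (D l)"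
  shows "(\<lambda>\<omega>. \<Sum>l<fst \<omega>. weighted_sample (grid n1 n2) h k (snd \<omega> l))
    \<in> borel_measurable (obs_space N n1 n2 D)"
  unfolding obs_space_def using assms
  by (intro measurable_random_partial_sum weighted_sample_measurable) (simp add: noise_ok_def)

lemma measurable_mat_inner_Yobs_centred:
  assumes "\<And>l. noise_ok \<zeta> (D l)"
  shows "(\<lambda>\<omega>. mat_inner n1 n2 (\<lambda>i j. Yobs N n1 n2 M \<omega> i j - M i j) A)
    \<in> borel_measurable (obs_space N n1 n2 D)"
  unfolding mat_inner_Yobs_centred_eq using measurable_obs_sum[OF assms] by measurable

lemma nn_integral_exp_obs_sum_le:
  fixes N \<zeta> s :: real and h k :: "nat \<times> nat \<Rightarrow> real"
  assumes N: "N > 0" and n: "n1 > 0" "n2 > 0" and noise: "\<And>l. noise_ok \<zeta> (D l)"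
    and sk: "\<And>x. x \<in> grid n1 n2 \<Longrightarrow> \<bar>s * k x\<bar> \<le> 1 / \<zeta>"
  shows "(\<integral>\<^sup>+ \<omega>. ennreal (exp (s * (\<Sum>l<fst \<omega>. weighted_sample (grid n1 n2) h k (snd \<omega> l))))
           \<partial>obs_space N n1 n2 D)
    \<le> ennreal (exp (N * ((\<Sum>x\<in>grid n1 n2. exp (s * h x + \<zeta>\<^sup>2 * (s * k x)\<^sup>2))
                          / card (grid n1 n2) - 1)))"
  unfolding obs_space_def
proof (rule nn_integral_compound_Poisson_exp_le)
  fix l
  show "prob_space (measure_pmf (pmf_of_set (grid n1 n2)) \<Otimes>\<^sub>M D l)"
    using noise by (intro prob_space_pair) (simp_all add: prob_space_measure_pmf noise_ok_def)
  show "weighted_sample (grid n1 n2) h k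
    \<in> borel_measurable (measure_pmf (pmf_of_set (grid n1 n2)) \<Otimes>\<^sub>M D l)"
    using noise by (intro weighted_sample_measurable) (simp add: noise_ok_def)
  show "(\<integral>\<^sup>+ p. ennreal (exp (s * weighted_sample (grid n1 n2) h k p))
      \<partial>(measure_pmf (pmf_of_set (grid n1 n2)) \<Otimes>\<^sub>M D l))
    \<le> ennreal ((\<Sum>x\<in>grid n1 n2. exp (s * h x + \<zeta>\<^sup>2 * (s * k x)\<^sup>2)) / card (grid n1 n2))"
    using finite_grid grid_nonempty[OF n] noise sk by (rule nn_integral_exp_weighted_sample_le)
qed (use N in \<open>simp_all add: sum_nonneg\<close>)

lemma Poisson_exponent_le:
  fixes N \<zeta> s c :: real and n1 n2 :: nat and M A :: "nat \<Rightarrow> nat \<Rightarrow> real"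
  assumes N: "N > 0" and \<zeta>: "\<zeta> \<ge> 0" and n: "n1 > 0" "n2 > 0" and c: "c = real n1 * real n2 / N"
    and M: "\<And>i j. (i, j) \<in> grid n1 n2 \<Longrightarrow> M i j \<in> {0..1}"
    and sA: "\<And>i j. (i, j) \<in> grid n1 n2 \<Longrightarrow> \<bar>s * (c * A i j)\<bar> * (1 + \<zeta>) \<le> 1/2"
  shows "N * ((\<Sum>(i, j)\<in>grid n1 n2. exp (M i j * (s * (c * A i j)) + \<zeta>\<^sup>2 * (s * (c * A i j))\<^sup>2))
              / card (grid n1 n2) - 1) - s * mat_inner n1 n2 M A
    \<le> s\<^sup>2 * ((exp 1 - 1) * (1 + \<zeta>)\<^sup>2 * c * (frob_norm n1 n2 A)\<^sup>2)"
proof -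
  let ?G = "grid n1 n2"
  have m: "real (card ?G) = N * c" and "c > 0"
    using N n by (simp_all add: c card_grid)
  define E where "E = (\<Sum>(i, j)\<in>?G. exp (M i j * (s * (c * A i j)) + \<zeta>\<^sup>2 * (s * (c * A i j))\<^sup>2))"
  define R where "R = (\<Sum>(i, j)\<in>?G. exp (M i j * (s * (c * A i j)) + \<zeta>\<^sup>2 * (s * (c * A i j))\<^sup>2)
    - 1 - M i j * (s * (c * A i j)))"
  \<comment> \<open>The linear part of \<open>exp w - 1 - w\<close> is exactly the centring term \<open>s * mat_inner n1 n2 M A\<close>.\<close>
  have "N * (E / card ?G - 1) - s * mat_inner n1 n2 M A
      = (E - card ?G - s * c * mat_inner n1 n2 M A) / c"
    using N \<open>c > 0\<close> by (simp add: m field_simps)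
  also have "E - card ?G - s * c * mat_inner n1 n2 M A = R"
    by (simp add: R_def E_def sum_subtractf mat_inner_def sum_distrib_left case_prod_unfold mult_ac)
  also have "R / c \<le> (\<Sum>(i, j)\<in>?G. (exp 1 - 1) * (1 + \<zeta>)\<^sup>2 * (s * (c * A i j))\<^sup>2) / c"
    unfolding R_def using M sA \<zeta> \<open>c > 0\<close>
    by (intro divide_right_mono sum_mono) (auto intro!: exp_linear_plus_square_excess_le)
  also have "(\<Sum>(i, j)\<in>?G. (exp 1 - 1) * (1 + \<zeta>)\<^sup>2 * (s * (c * A i j))\<^sup>2)
      = (exp 1 - 1) * (1 + \<zeta>)\<^sup>2 * s\<^sup>2 * c\<^sup>2 * (frob_norm n1 n2 A)\<^sup>2"
    by (simp add: frob_norm_def sum_nonneg sum_distrib_left case_prod_unfold power_mult_distrib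
        mult_ac)
  also have "\<dots> / c = s\<^sup>2 * ((exp 1 - 1) * (1 + \<zeta>)\<^sup>2 * c * (frob_norm n1 n2 A)\<^sup>2)"
    using \<open>c > 0\<close> by (simp add: power2_eq_square)
  finally show ?thesis
    unfolding E_def .
qed

lemma nn_integral_exp_mat_inner_Yobs_le:
  fixes N \<zeta> s :: real and n1 n2 :: nat and M A :: "nat \<Rightarrow> nat \<Rightarrow> real"
  assumes N: "N > 0" and \<zeta>: "\<zeta> > 0" and n: "n1 > 0" "n2 > 0"
    and M: "\<And>i j. (i, j) \<in> grid n1 n2 \<Longrightarrow> M i j \<in> {0..1}"
    and noise: "\<And>l. noise_ok \<zeta> (D l)"
    and s: "\<bar>s\<bar> * (1 + \<zeta>) * (real n1 * real n2 / N) * max_norm n1 n2 A \<le> 1/2"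
  shows "(\<integral>\<^sup>+ \<omega>. ennreal (exp (s * mat_inner n1 n2 (\<lambda>i j. Yobs N n1 n2 M \<omega> i j - M i j) A))
           \<partial>obs_space N n1 n2 D)
    \<le> ennreal (exp (s\<^sup>2 *
         ((exp 1 - 1) * (1 + \<zeta>)\<^sup>2 * (real n1 * real n2 / N) * (frob_norm n1 n2 A)\<^sup>2)))"
proof -
  define c where "c = real n1 * real n2 / N"
  define h where "h = (\<lambda>(i, j). c * M i j * A i j)"
  define k where "k = (\<lambda>(i, j). c * A i j)"
  define S where "S \<omega> = (\<Sum>l<fst \<omega>. weighted_sample (grid n1 n2) h k (snd \<omega> l))"
    for \<omega> :: "nat \<times> (nat \<Rightarrow> (nat \<times> nat) \<times> real)"
  define \<phi> where "\<phi> = (\<Sum>x\<in>grid n1 n2. exp (s * h x + \<zeta>\<^sup>2 * (s * k x)\<^sup>2)) / card (grid n1 n2)"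
  have sA: "\<bar>s * (c * A i j)\<bar> * (1 + \<zeta>) \<le> 1/2" if "(i, j) \<in> grid n1 n2" for i j
  proof -
    have "\<bar>s * (c * A i j)\<bar> * (1 + \<zeta>) = \<bar>s\<bar> * (1 + \<zeta>) * c * \<bar>A i j\<bar>"
      using N \<zeta> by (simp add: c_def abs_mult)
    also have "\<dots> \<le> \<bar>s\<bar> * (1 + \<zeta>) * c * max_norm n1 n2 A"
      using that N \<zeta> by (intro mult_left_mono abs_le_max_norm) (auto simp: c_def)
    finally show ?thesis
      using s unfolding c_def by linarith
  qed
  have "\<bar>s * k x\<bar> \<le> 1 / \<zeta>" if "x \<in> grid n1 n2" for x
    using sA[of "fst x" "snd x"] that \<zeta> by (auto simp: k_def case_prod_unfold field_simps)
  with N n noise have S_mgf: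
      "(\<integral>\<^sup>+ \<omega>. ennreal (exp (s * S \<omega>)) \<partial>obs_space N n1 n2 D) \<le> ennreal (exp (N * (\<phi> - 1)))"
    unfolding S_def \<phi>_def by (rule nn_integral_exp_obs_sum_le)
  have exponent: "N * (\<phi> - 1) - s * mat_inner n1 n2 M A
      \<le> s\<^sup>2 * ((exp 1 - 1) * (1 + \<zeta>)\<^sup>2 * c * (frob_norm n1 n2 A)\<^sup>2)"
    using Poisson_exponent_le[OF N _ n c_def M sA] \<zeta>
    by (simp add: \<phi>_def h_def k_def case_prod_unfold mult_ac)
  have S_exp_measurable: "(\<lambda>\<omega>. ennreal (exp (s * S \<omega>))) \<in> borel_measurable (obs_space N n1 n2 D)"
    using measurable_obs_sum[OF noise] unfolding S_def by measurable
  have "(\<integral>\<^sup>+ \<omega>. ennreal (exp (s * mat_inner n1 n2 (\<lambda>i j. Yobs N n1 n2 M \<omega> i j - M i j) A))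
        \<partial>obs_space N n1 n2 D)
      = (\<integral>\<^sup>+ \<omega>. ennreal (exp (- s * mat_inner n1 n2 M A)) * ennreal (exp (s * S \<omega>))
          \<partial>obs_space N n1 n2 D)"
    by (intro nn_integral_cong)
      (simp add: mat_inner_Yobs_centred_eq S_def h_def k_def c_def
        ennreal_mult''[symmetric] mult_exp_exp algebra_simps)
  also have "\<dots> = ennreal (exp (- s * mat_inner n1 n2 M A))
      * (\<integral>\<^sup>+ \<omega>. ennreal (exp (s * S \<omega>)) \<partial>obs_space N n1 n2 D)"
    using S_exp_measurable by (rule nn_integral_cmult)
  also have "\<dots> \<le> ennreal (exp (- s * mat_inner n1 n2 M A)) * ennreal (exp (N * (\<phi> - 1)))"
    using S_mgf by (rule mult_left_mono) simp
  also have "\<dots> \<le> ennreal (exp (s\<^sup>2 * ((exp 1 - 1) * (1 + \<zeta>)\<^sup>2 * c * (frob_norm n1 n2 A)\<^sup>2)))"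
    using exponent by (simp add: ennreal_mult''[symmetric] mult_exp_exp)
  finally show ?thesis
    by (simp add: c_def)
qed

lemma mat_inner_Yobs_upper_tail:
  fixes N \<zeta> u :: real and n1 n2 :: nat and M A :: "nat \<Rightarrow> nat \<Rightarrow> real"
  assumes N: "N > 0" and \<zeta>: "\<zeta> > 0" and n: "n1 > 0" "n2 > 0"
    and M: "\<And>i j. (i, j) \<in> grid n1 n2 \<Longrightarrow> M i j \<in> {0..1}"
    and noise: "\<And>l. noise_ok \<zeta> (D l)"
    and u: "u > 0" and A: "max_norm n1 n2 A > 0"
  shows "measure (obs_space N n1 n2 D)
     {\<omega> \<in> space (obs_space N n1 n2 D).
        2 * (\<zeta> + 1) * (sqrt (exp 1 - 1) * frob_norm n1 n2 A * sqrt (real n1 * real n2 / N * u)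
           + max_norm n1 n2 A * (real n1 * real n2 / N) * u)
        \<le> mat_inner n1 n2 (\<lambda>i j. Yobs N n1 n2 M \<omega> i j - M i j) A} \<le> exp (- u)"
proof -
  interpret prob_space "obs_space N n1 n2 D"
    using noise by (rule prob_space_obs_space)
  define c where "c = real n1 * real n2 / N"
  define F where "F = frob_norm n1 n2 A"
  define a where "a = max_norm n1 n2 A"
  define V where "V = (exp 1 - 1) * (1 + \<zeta>)\<^sup>2 * c * F\<^sup>2"
  define b where "b = 2 * (1 + \<zeta>) * c * a"
  have c: "c > 0" and a: "a > 0" and F: "F \<ge> a"
    using N n A max_norm_le_frob_norm[OF n] by (simp_all add: c_def a_def F_def)
  have "exp 1 - 1 > (0::real)"
    using exp_one_ge_8_div_3 by simp
  then have V: "V > 0" and b: "b > 0"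
    using c a F \<zeta> by (simp_all add: V_def b_def)
  have "V * u = ((1 + \<zeta>) * F)\<^sup>2 * ((exp 1 - 1) * (c * u))"
    by (simp add: V_def power_mult_distrib)
  then have "sqrt (V * u) = (1 + \<zeta>) * F * (sqrt (exp 1 - 1) * sqrt (c * u))"
    using \<zeta> a F by (simp only: real_sqrt_mult real_sqrt_abs) simp
  then have threshold: "2 * (\<zeta> + 1) * (sqrt (exp 1 - 1) * F * sqrt (c * u) + a * c * u)
      = 2 * sqrt (V * u) + b * u"
    by (simp add: b_def algebra_simps)
  have "prob {\<omega> \<in> space (obs_space N n1 n2 D).
      2 * sqrt (V * u) + b * u \<le> mat_inner n1 n2 (\<lambda>i j. Yobs N n1 n2 M \<omega> i j - M i j) A}
    \<le> exp (- u)"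
  proof (rule sub_gamma_upper_tail[OF measurable_mat_inner_Yobs_centred[OF noise] V b u])
    fix s :: real assume s: "0 < s" "s \<le> 1 / b"
    then have "\<bar>s\<bar> * (1 + \<zeta>) * c * a \<le> 1/2"
      using b by (simp add: b_def field_simps)
    with M noise show
      "(\<integral>\<^sup>+ \<omega>. ennreal (exp (s * mat_inner n1 n2 (\<lambda>i j. Yobs N n1 n2 M \<omega> i j - M i j) A))
        \<partial>obs_space N n1 n2 D) \<le> ennreal (exp (s\<^sup>2 * V))"
      unfolding V_def c_def F_def a_def by (rule nn_integral_exp_mat_inner_Yobs_le[OF N \<zeta> n])
  qed
  then show ?thesis
    by (simp only: threshold[symmetric] c_def F_def a_def mult.commute[of _ "real n1 * real n2 / N"]
        mult.assoc)
qed

lemma mat_inner_Yobs_abs_tail: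
  fixes N \<zeta> u t :: real and n1 n2 :: nat and M A :: "nat \<Rightarrow> nat \<Rightarrow> real"
  assumes N: "N > 0" and \<zeta>: "\<zeta> > 0" and n: "n1 > 0" "n2 > 0"
    and M: "\<And>i j. (i, j) \<in> grid n1 n2 \<Longrightarrow> M i j \<in> {0..1}"
    and noise: "\<And>l. noise_ok \<zeta> (D l)"
    and u: "u > 0" and A: "max_norm n1 n2 A > 0"
    and t: "2 * (\<zeta> + 1) * (sqrt (exp 1 - 1) * frob_norm n1 n2 A * sqrt (real n1 * real n2 / N * u)
           + max_norm n1 n2 A * (real n1 * real n2 / N) * u) \<le> t"
  shows "measure (obs_space N n1 n2 D)
     {\<omega> \<in> space (obs_space N n1 n2 D). t < \<bar>mat_inner n1 n2 (\<lambda>i j. Yobs N n1 n2 M \<omega> i j - M i j) A\<bar>}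
     \<le> 2 * exp (- u)"
proof -
  interpret prob_space "obs_space N n1 n2 D"
    using noise by (rule prob_space_obs_space)
  define W where "W B \<omega> = mat_inner n1 n2 (\<lambda>i j. Yobs N n1 n2 M \<omega> i j - M i j) B" for B \<omega>
  have [measurable]: "W B \<in> borel_measurable (obs_space N n1 n2 D)" for B
    unfolding W_def using noise by (rule measurable_mat_inner_Yobs_centred)
  have tail: "prob {\<omega> \<in> space (obs_space N n1 n2 D). t \<le> W B \<omega>} \<le> exp (- u)"
    if B: "max_norm n1 n2 B = max_norm n1 n2 A" "frob_norm n1 n2 B = frob_norm n1 n2 A" for B
  proof -
    have "prob {\<omega> \<in> space (obs_space N n1 n2 D). t \<le> W B \<omega>}
        \<le> prob {\<omega> \<in> space (obs_space N n1 n2 D).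
             2 * (\<zeta> + 1) * (sqrt (exp 1 - 1) * frob_norm n1 n2 B * sqrt (real n1 * real n2 / N * u)
               + max_norm n1 n2 B * (real n1 * real n2 / N) * u) \<le> W B \<omega>}"
      using t B by (intro finite_measure_mono) auto
    also have "\<dots> \<le> exp (- u)"
      unfolding W_def using B u A by (intro mat_inner_Yobs_upper_tail[OF N \<zeta> n M noise]) auto
    finally show ?thesis .
  qed
  have "W (\<lambda>i j. - A i j) \<omega> = - W A \<omega>" for \<omega>
    by (simp add: W_def mat_inner_def case_prod_unfold sum_negf)
  then have tails: "prob {\<omega> \<in> space (obs_space N n1 n2 D). t \<le> W A \<omega>} \<le> exp (- u)"
      "prob {\<omega> \<in> space (obs_space N n1 n2 D). t \<le> - W A \<omega>} \<le> exp (- u)"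
    using tail[of A] tail[of "\<lambda>i j. - A i j"] by (simp_all add: max_norm_def frob_norm_def)
  have "prob {\<omega> \<in> space (obs_space N n1 n2 D). t < \<bar>W A \<omega>\<bar>}
      \<le> prob ({\<omega> \<in> space (obs_space N n1 n2 D). t \<le> W A \<omega>}
             \<union> {\<omega> \<in> space (obs_space N n1 n2 D). t \<le> - W A \<omega>})"
    by (intro finite_measure_mono) auto
  also have "\<dots> \<le> prob {\<omega> \<in> space (obs_space N n1 n2 D). t \<le> W A \<omega>}
             + prob {\<omega> \<in> space (obs_space N n1 n2 D). t \<le> - W A \<omega>}"
    by (intro measure_subadditive) (simp_all add: emeasure_eq_measure)
  finally show ?thesis
    using tails by (simp add: W_def)
qed

lemma mat_inner_Yobs_deviation:
  fixes N \<zeta> u t :: real and n1 n2 :: nat and M A :: "nat \<Rightarrow> nat \<Rightarrow> real"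
  assumes N: "N > 0" and \<zeta>: "\<zeta> > 0" and n: "n1 > 0" "n2 > 0"
    and M: "\<And>i j. (i, j) \<in> grid n1 n2 \<Longrightarrow> M i j \<in> {0..1}"
    and noise: "\<And>l. noise_ok \<zeta> (D l)"
    and u: "u \<ge> 0"
    and t: "2 * (\<zeta> + 1) * (sqrt (exp 1 - 1) * frob_norm n1 n2 A * sqrt (real n1 * real n2 / N * u)
           + max_norm n1 n2 A * (real n1 * real n2 / N) * u) \<le> t"
  shows "measure (obs_space N n1 n2 D)
     {\<omega> \<in> space (obs_space N n1 n2 D). \<bar>mat_inner n1 n2 (\<lambda>i j. Yobs N n1 n2 M \<omega> i j - M i j) A\<bar> \<le> t}
     \<ge> 1 - 2 * exp (- u)"
proof -
  interpret prob_space "obs_space N n1 n2 D"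
    using noise by (rule prob_space_obs_space)
  define W where "W \<omega> = mat_inner n1 n2 (\<lambda>i j. Yobs N n1 n2 M \<omega> i j - M i j) A" for \<omega>
  have [measurable]: "W \<in> borel_measurable (obs_space N n1 n2 D)"
    unfolding W_def using noise by (rule measurable_mat_inner_Yobs_centred)
  consider "u = 0" | "max_norm n1 n2 A = 0" | "u > 0" "max_norm n1 n2 A > 0"
    using u max_norm_nonneg[OF n, of A] by fastforce
  then show ?thesis
  proof cases
    case 1
    then show ?thesis
      by (simp add: order_trans[OF _ measure_nonneg])
  next
    case 2
    then have "A i j = 0" if "(i, j) \<in> grid n1 n2" for i j
      using abs_le_max_norm[OF that, of A] by simp
    then have "W \<omega> = 0" for \<omega>
      by (auto simp: W_def mat_inner_def intro!: sum.neutral)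
    moreover have "0 \<le> t"
      using t 2 \<zeta> u N by (auto intro!: order_trans[OF _ t] mult_nonneg_nonneg frob_norm_nonneg)
    ultimately show ?thesis
      using prob_space by (simp add: W_def[symmetric])
  next
    case 3
    have "prob (space (obs_space N n1 n2 D) - {\<omega> \<in> space (obs_space N n1 n2 D). \<bar>W \<omega>\<bar> \<le> t})
        = prob {\<omega> \<in> space (obs_space N n1 n2 D). t < \<bar>W \<omega>\<bar>}"
      by (rule arg_cong[where f = prob]) auto
    also have "\<dots> \<le> 2 * exp (- u)"
      unfolding W_def using 3 t by (intro mat_inner_Yobs_abs_tail[OF N \<zeta> n M noise]) auto
    finally show ?thesis
      by (subst (asm) prob_compl) (measurable, simp add: W_def)
  qed
qed

lemma mat_inner_indicator:
  assumes "S \<subseteq> grid n1 n2"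
  shows "mat_inner n1 n2 X (\<lambda>i j. if (i, j) \<in> S then 1 else 0) = (\<Sum>(i, j)\<in>S. X i j)"
  using assms finite_grid
  by (simp add: mat_inner_def case_prod_unfold if_distrib sum.If_cases Int_absorb1 cong: if_cong)

lemma frob_norm_indicator:
  assumes "S \<subseteq> grid n1 n2"
  shows "frob_norm n1 n2 (\<lambda>i j. if (i, j) \<in> S then 1 else 0) = sqrt (card S)"
proof -
  have "(\<Sum>(i, j)\<in>grid n1 n2. (if (i, j) \<in> S then 1 else 0 :: real)\<^sup>2)
      = mat_inner n1 n2 (\<lambda>i j. if (i, j) \<in> S then 1 else 0) (\<lambda>i j. if (i, j) \<in> S then 1 else 0)"
    by (simp add: mat_inner_def power2_eq_square)
  also have "\<dots> = card S"
    using assms by (simp add: mat_inner_indicator case_prod_unfold cong: sum.cong_simp)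
  finally show ?thesis
    by (simp add: frob_norm_def)
qed

lemma max_norm_indicator:
  assumes "S \<subseteq> grid n1 n2" "S \<noteq> {}"
  shows "max_norm n1 n2 (\<lambda>i j. if (i, j) \<in> S then 1 else 0) = 1"
  unfolding max_norm_def
proof (rule Max_eqI)
  obtain x where "x \<in> S"
    using assms by blast
  then show "1 \<in> (\<lambda>(i, j). \<bar>if (i, j) \<in> S then 1 else 0 :: real\<bar>) ` grid n1 n2"
    using assms by (intro image_eqI[of _ _ x]) (auto simp: case_prod_unfold)
qed (auto simp: finite_grid)

lemma subset_sum_Yobs_deviation:
  fixes N \<zeta> :: real and n1 n2 :: nat and M :: "nat \<Rightarrow> nat \<Rightarrow> real"
  assumes N: "N > 0" and \<zeta>: "\<zeta> > 0" and n: "n1 > 0" "n2 > 0"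
    and M: "\<And>i j. (i, j) \<in> grid n1 n2 \<Longrightarrow> M i j \<in> {0..1}"
    and noise: "\<And>l. noise_ok \<zeta> (D l)"
    and S: "S \<subseteq> grid n1 n2" "S \<noteq> {}"
  shows "measure (obs_space N n1 n2 D)
     {\<omega> \<in> space (obs_space N n1 n2 D).
        \<bar>\<Sum>(i, j)\<in>S. Yobs N n1 n2 M \<omega> i j - M i j\<bar>
        \<le> 8 * (\<zeta> + 1) *
           (sqrt (real (card S) * real n1 * real n2 / N * ln (real n1 * real n2))
            + real n1 * real n2 / N * ln (real n1 * real n2))}
     \<ge> 1 - 2 * (real n1 * real n2) powr (-4)"
proof -
  define m where "m = real n1 * real n2"
  define c where "c = m / N"
  define u where "u = 4 * ln m"
  have m: "m \<ge> 1"
    using n by (simp add: m_def Suc_le_eq flip: of_nat_mult)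
  then have u: "u \<ge> 0" and c: "c > 0"
    using N by (simp_all add: u_def c_def)
  have "sqrt (real (card S)) * sqrt (c * u) = sqrt 4 * sqrt (real (card S) * c * ln m)"
    by (simp only: real_sqrt_mult[symmetric]) (simp add: u_def algebra_simps)
  then have "2 * (\<zeta> + 1) * (sqrt (exp 1 - 1) * sqrt (card S) * sqrt (c * u) + c * u)
      = 2 * (\<zeta> + 1) * (sqrt (exp 1 - 1) * (2 * sqrt (real (card S) * c * ln m)) + 4 * (c * ln m))"
    by (simp add: u_def mult.assoc)
  also have "\<dots> \<le> 2 * (\<zeta> + 1) * (2 * (2 * sqrt (real (card S) * c * ln m)) + 4 * (c * ln m))"
    using exp_le real_sqrt_le_mono[of "exp 1 - 1" 4] \<zeta> m c
    by (intro mult_left_mono add_right_mono mult_right_mono) auto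
  finally have "2 * (\<zeta> + 1) * (sqrt (exp 1 - 1) * sqrt (card S) * sqrt (c * u) + c * u)
      \<le> 8 * (\<zeta> + 1) * (sqrt (real (card S) * c * ln m) + c * ln m)"
    by (simp add: algebra_simps)
  with M noise u have "measure (obs_space N n1 n2 D)
      {\<omega> \<in> space (obs_space N n1 n2 D).
        \<bar>mat_inner n1 n2 (\<lambda>i j. Yobs N n1 n2 M \<omega> i j - M i j) (\<lambda>i j. if (i, j) \<in> S then 1 else 0)\<bar>
        \<le> 8 * (\<zeta> + 1) * (sqrt (real (card S) * c * ln m) + c * ln m)}
      \<ge> 1 - 2 * exp (- u)"
    unfolding c_def m_def
    by (intro mat_inner_Yobs_deviation[OF N \<zeta> n])
      (simp_all add: frob_norm_indicator[OF S(1)] max_norm_indicator[OF S])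
  moreover have "exp (- u) = m powr (-4)"
    using m by (simp add: u_def powr_def)
  ultimately show ?thesis
    by (simp add: mat_inner_indicator[OF S(1)] c_def m_def mult.assoc)
qed

theorem lemma1:
  fixes N \<zeta> :: real and n1 n2 :: nat
    and Mstar :: "nat \<Rightarrow> nat \<Rightarrow> real" and D :: "nat \<Rightarrow> real measure"
  assumes N_pos: "N > 0" and zeta_pos: "\<zeta> > 0"
    and n1_pos: "n1 > 0" and n2_pos: "n2 > 0"
    and Mstar_range: "\<And>i j. (i, j) \<in> grid n1 n2 \<Longrightarrow> Mstar i j \<in> {0..1}"
    and noise: "\<And>l. noise_ok \<zeta> (D l)"
  shows
    "(\<forall>(A :: nat \<Rightarrow> nat \<Rightarrow> real) (u :: real). u \<ge> 0 \<longrightarrow>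
        measure (obs_space N n1 n2 D)
          {\<omega> \<in> space (obs_space N n1 n2 D).
             \<bar>mat_inner n1 n2 (\<lambda>i j. Yobs N n1 n2 Mstar \<omega> i j - Mstar i j) A\<bar>
             \<le> 2 * (\<zeta> + 1) *
                (sqrt (exp 1 - 1) * frob_norm n1 n2 A * sqrt (real n1 * real n2 / N * u)
                 + max_norm n1 n2 A * (real n1 * real n2 / N) * u)}
        \<ge> 1 - 4 * exp (- u))
     \<and>
     (\<forall>S. S \<subseteq> grid n1 n2 \<longrightarrow> S \<noteq> {} \<longrightarrow>
        measure (obs_space N n1 n2 D)
          {\<omega> \<in> space (obs_space N n1 n2 D).
             \<bar>\<Sum>(i,j)\<in>S. Yobs N n1 n2 Mstar \<omega> i j - Mstar i j\<bar>
             \<le> 8 * (\<zeta> + 1) *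
                (sqrt (real (card S) * real n1 * real n2 / N * ln (real n1 * real n2))
                 + real n1 * real n2 / N * ln (real n1 * real n2))}
        \<ge> 1 - 4 * (real n1 * real n2) powr (-4))"
  apply (intro conjI allI impI)
  subgoal for A u
    using mat_inner_Yobs_deviation[where M = Mstar and D = D and A = A and u = u,
        OF N_pos zeta_pos n1_pos n2_pos Mstar_range noise _ order_refl] exp_ge_zero[of "- u"]
    by linarith
  subgoal for S
    using subset_sum_Yobs_deviation[where M = Mstar and D = D and S = S,
        OF N_pos zeta_pos n1_pos n2_pos Mstar_range noise] powr_ge_zero[of "real n1 * real n2" "-4"]
    by linarith
  done

end
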